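(* Fix $\beta>2$ and let $F_\beta(\mathbf{x},r)$, $r_1^\beta<r_2^\beta$, $y_1^\beta(r)$, $u_\beta(r)$, $\boldsymbol{\sigma}_1^\beta(r)$, $\boldsymbol{\sigma}_2^\beta(r)$, $\mathbf{p}^\beta(r)$ be as in the context. For $r\in(0,r_1^\beta)\cup(r_1^\beta,r_2^\beta)$ define $$\mathbf{l}_\beta(r)=\begin{cases}\{\mathbf{x}: x_1+x_2=H_\beta(y_1^\beta(r))+K_\beta(y_1^\beta(r))\}\cap\Xi & r\in(0,r_1^\beta),\\ \{\mathbf{x}: x_1+x_2=2u_\beta(r)\}\cap\Xi & r\in(r_1^\beta,r_2^\beta).\end{cases}$$ Then the restriction of $F_\beta(\cdot,r)$ to $\mathbf{l}_\beta(r)$ attains its minimum only at $\boldsymbol{\sigma}_1^\beta(r)$ and $\boldsymbol{\sigma}_2^\beta(r)$ if $r\in(0,r_1^\beta)$, and only at $\mathbf{p}^\beta(r)$ if $r\in(r_1^\beta,r_2^\beta)$.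
   Context: $\Xi=\{(x_1,x_2): x_1,x_2\ge0,\ x_1+x_2\le1\}$, $x_0=1-x_1-x_2$, $\mathbf{v}_k=(\cos(2\pi k/3),\sin(2\pi k/3))$, $F_\beta(\mathbf{x},r)=-\frac12|\sum_{k=0}^2x_k\mathbf{v}_k|^2+\frac1\beta\sum_{k=0}^2x_k\log(3x_k)+r\,x_0-\frac r2(x_1+x_2)$ (external field of magnitude $r$, angle $\pi$), with $0\log0=0$. Let $h(t)=-3t(1-2t)\log\frac{1-2t}{t}-3t+1$, $f_r(t)=\frac{2}{3(1-r-3t)}\log\frac{1-2t}{t}$, $k_r=(1-r)/3$; for $0<r<1$, $m_0(r)$ is the unique solution in $(0,k_r)$ of $h(t)=r$; $r_2^\beta$ is the unique $r\in(0,1)$ with $f_r(m_0(r))=\beta$; $r_1^\beta=1-\frac2\beta-\frac{2}{3\beta}\log(\frac{3\beta}2-2)$. For $r\in(0,r_2^\beta)$, $u_\beta(r)$ is the unique solution of $f_r(t)=\beta$ in $(m_0(r),k_r)$ and $\mathbf{p}^\beta(r)=(u_\beta(r),u_\beta(r))$. Let $G_\beta(x)=\frac1\beta\log x-\frac32x$, $l_\beta=2/(3\beta)$, $g_\beta=G_\beta(l_\beta)$; for $y<g_\beta$, $H_\beta(y)<l_\beta<K_\beta(y)$ solve $G_\beta(x)=y$, and $H_\beta(g_\beta)=K_\beta(g_\beta)=l_\beta$. For $r\le r_1^\beta$, $y_1^\beta(r)$ is the unique $y\le g_\beta$ with $K_\beta(y-3r/2)+H_\beta(y)+K_\beta(y)=1$;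 $\boldsymbol{\sigma}_1^\beta(r)=(K_\beta(y_1^\beta(r)),H_\beta(y_1^\beta(r)))$ and $\boldsymbol{\sigma}_2^\beta(r)=(H_\beta(y_1^\beta(r)),K_\beta(y_1^\beta(r)))$. *)

theory Defs
  imports Complex_Main
begin

text \<open>Points of the simplex are pairs (x1, x2); x0 = 1 - x1 - x2.\<close>

definition Xi :: "(real \<times> real) set" where
  "Xi = {(x1, x2). x1 \<ge> 0 \<and> x2 \<ge> 0 \<and> x1 + x2 \<le> 1}"

definition xlog3x :: "real \<Rightarrow> real" where
  "xlog3x t = (if t = 0 then 0 else t * ln (3 * t))"

definition vk :: "nat \<Rightarrow> real \<times> real" where
  "vk k = (cos (2 * pi * real k / 3), sin (2 * pi * real k / 3))"

definition Fbeta :: "real \<Rightarrow> real \<times> real \<Rightarrow> real \<Rightarrow> real" where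
  "Fbeta \<beta> x r =
     (let x1 = fst x; x2 = snd x; x0 = 1 - x1 - x2;
          xs = (\<lambda>k::nat. if k = 0 then x0 else if k = 1 then x1 else x2);
          a = (\<Sum>k<3. xs k * fst (vk k));
          b = (\<Sum>k<3. xs k * snd (vk k))
      in - (1/2) * (a\<^sup>2 + b\<^sup>2) + (1/\<beta>) * (\<Sum>k<3. xlog3x (xs k))
         + r * x0 - (r/2) * (x1 + x2))"

definition hfun :: "real \<Rightarrow> real" where
  "hfun t = - 3 * t * (1 - 2*t) * ln ((1 - 2*t) / t) - 3 * t + 1"

definition ffun :: "real \<Rightarrow> real \<Rightarrow> real" where
  "ffun r t = 2 / (3 * (1 - r - 3*t)) * ln ((1 - 2*t) / t)"

definition kfun :: "real \<Rightarrow> real" where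
  "kfun r = (1 - r) / 3"

definition m0 :: "real \<Rightarrow> real" where
  "m0 r = (THE t. 0 < t \<and> t < kfun r \<and> hfun t = r)"

definition r2 :: "real \<Rightarrow> real" where
  "r2 \<beta> = (THE r. 0 < r \<and> r < 1 \<and> ffun r (m0 r) = \<beta>)"

definition r1 :: "real \<Rightarrow> real" where
  "r1 \<beta> = 1 - 2/\<beta> - 2/(3*\<beta>) * ln (3*\<beta>/2 - 2)"

definition ubeta :: "real \<Rightarrow> real \<Rightarrow> real" where
  "ubeta \<beta> r = (THE t. m0 r < t \<and> t < kfun r \<and> ffun r t = \<beta>)"

definition pbeta :: "real \<Rightarrow> real \<Rightarrow> real \<times> real" where
  "pbeta \<beta> r = (ubeta \<beta> r, ubeta \<beta> r)"

definition Gfun :: "real \<Rightarrow> real \<Rightarrow> real" where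
  "Gfun \<beta> x = (1/\<beta>) * ln x - 3/2 * x"

definition lbeta :: "real \<Rightarrow> real" where
  "lbeta \<beta> = 2 / (3*\<beta>)"

definition gbeta :: "real \<Rightarrow> real" where
  "gbeta \<beta> = Gfun \<beta> (lbeta \<beta>)"

text \<open>For y \<le> g: H is the solution of G x = y in (0, l], K the solution in [l, \<infinity>).
  For y < g these are the two solutions H < l < K; for y = g both equal l.\<close>
definition Hfun :: "real \<Rightarrow> real \<Rightarrow> real" where
  "Hfun \<beta> y = (THE x. 0 < x \<and> x \<le> lbeta \<beta> \<and> Gfun \<beta> x = y)"

definition Kfun :: "real \<Rightarrow> real \<Rightarrow> real" where
  "Kfun \<beta> y = (THE x. lbeta \<beta> \<le> x \<and> Gfun \<beta> x = y)"

definition y1 :: "real \<Rightarrow> real \<Rightarrow> real" where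
  "y1 \<beta> r = (THE y. y \<le> gbeta \<beta> \<and>
      Kfun \<beta> (y - 3*r/2) + Hfun \<beta> y + Kfun \<beta> y = 1)"

definition sigma1 :: "real \<Rightarrow> real \<Rightarrow> real \<times> real" where
  "sigma1 \<beta> r = (Kfun \<beta> (y1 \<beta> r), Hfun \<beta> (y1 \<beta> r))"

definition sigma2 :: "real \<Rightarrow> real \<Rightarrow> real \<times> real" where
  "sigma2 \<beta> r = (Hfun \<beta> (y1 \<beta> r), Kfun \<beta> (y1 \<beta> r))"

definition lline :: "real \<Rightarrow> real \<Rightarrow> (real \<times> real) set" where
  "lline \<beta> r =
     (if 0 < r \<and> r < r1 \<beta>
      then {x. fst x + snd x = Hfun \<beta> (y1 \<beta> r) + Kfun \<beta> (y1 \<beta> r)} \<inter> Xi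
      else {x. fst x + snd x = 2 * ubeta \<beta> r} \<inter> Xi)"

end

theory Submission
  imports Defs "HOL-Real_Asymp.Real_Asymp"
begin

text \<open>On the line \<open>x\<^sub>1 + x\<^sub>2 = 2a\<close> write \<open>x = (a + d, a - d)\<close>. Then \<open>F\<^sub>\<beta>\<close> is a function
  of \<open>a\<close> plus \<open>\<psi>(d) = -3/2 d\<^sup>2 + (xlog3x (a + d) + xlog3x (a - d))/\<beta>\<close>, which is even with
  \<open>\<psi>'(d) = -3d + 2/\<beta> artanh(d/a)\<close>. As \<open>artanh t / t\<close> increases from \<open>1\<close>, \<open>\<psi>\<close> has a
  unique minimum on \<open>[0, a]\<close>: at \<open>0\<close> if \<open>\<beta> a \<le> 2/3\<close>, and otherwise at its unique critical point.

  For \<open>r\<^sub>1 < r < r\<^sub>2\<close> the line has \<open>a = u\<^sub>\<beta>(r) < l\<^sub>\<beta> = 2/(3\<beta>)\<close> (this is what \<open>r > r\<^sub>1\<close>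
  encodes), so \<open>p\<^sup>\<beta>(r)\<close> is the only minimiser. For \<open>r < r\<^sub>1\<close> the numbers
  \<open>H = H\<^sub>\<beta>(y\<^sub>1)\<close> and \<open>K = K\<^sub>\<beta>(y\<^sub>1)\<close> lie on one level set of \<open>G\<^sub>\<beta>\<close>, i.e.
  \<open>ln (K/H) = 3\<beta>/2 (K - H)\<close>, which says precisely that \<open>d = (K - H)/2\<close> is the critical point
  for \<open>a = (H + K)/2\<close>; so the minimisers are \<open>(K, H)\<close> and \<open>(H, K)\<close>.\<close>


lemma DERIV_pos_inside_imp_increasing:
  fixes f f' :: "real \<Rightarrow> real"
  assumes "a < b" "\<And>x. a \<le> x \<Longrightarrow> x \<le> b \<Longrightarrow> (f has_real_derivative f' x) (at x)"
    "\<And>x. a < x \<Longrightarrow> x < b \<Longrightarrow> 0 < f' x"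
  shows "f a < f b"
proof (rule DERIV_pos_imp_increasing_open[OF assms(1)])
  show "\<And>x. a < x \<Longrightarrow> x < b \<Longrightarrow> \<exists>y. (f has_real_derivative y) (at x) \<and> 0 < y"
    using assms(2,3) by (metis less_imp_le)
  show "continuous_on {a..b} f"
    by (rule continuous_at_imp_continuous_on) (metis assms(2) DERIV_isCont atLeastAtMost_iff)
qed

lemma DERIV_neg_inside_imp_decreasing:
  fixes f f' :: "real \<Rightarrow> real"
  assumes "a < b" "\<And>x. a \<le> x \<Longrightarrow> x \<le> b \<Longrightarrow> (f has_real_derivative f' x) (at x)"
    "\<And>x. a < x \<Longrightarrow> x < b \<Longrightarrow> f' x < 0"
  shows "f b < f a"
  using DERIV_pos_inside_imp_increasing[of a b "\<lambda>x. - f x" "\<lambda>x. - f' x"] assms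
  by (auto intro: DERIV_minus)

lemma DERIV_sign_change_imp_strict_min:
  fixes f f' :: "real \<Rightarrow> real"
  assumes "a \<le> c" "c \<le> b" and cont: "continuous_on {a..b} f"
    and deriv: "\<And>x. a < x \<Longrightarrow> x < b \<Longrightarrow> (f has_real_derivative f' x) (at x)"
    and neg: "\<And>x. a < x \<Longrightarrow> x < c \<Longrightarrow> f' x < 0"
    and pos: "\<And>x. c < x \<Longrightarrow> x < b \<Longrightarrow> 0 < f' x"
    and x: "a \<le> x" "x \<le> b" "x \<noteq> c"
  shows "f c < f x"
proof (cases "x < c")
  case True
  show ?thesis
  proof (rule DERIV_neg_imp_decreasing_open[OF True])
    show "continuous_on {x..c} f"
      using continuous_on_subset[OF cont] x assms(2) by auto
    fix z assume "x < z" "z < c"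
    then show "\<exists>y. (f has_real_derivative y) (at z) \<and> y < 0"
      using deriv[of z] neg[of z] x assms(2) by auto
  qed
next
  case False
  then have "c < x" using x(3) by simp
  show ?thesis
  proof (rule DERIV_pos_imp_increasing_open[OF \<open>c < x\<close>])
    show "continuous_on {c..x} f"
      using continuous_on_subset[OF cont] x assms(1) by auto
    fix z assume "c < z" "z < x"
    then show "\<exists>y. (f has_real_derivative y) (at z) \<and> 0 < y"
      using deriv[of z] pos[of z] x assms(1) by auto
  qed
qed

lemma argmin_set_eqI:
  fixes f :: "'a \<Rightarrow> 'b::linorder"
  assumes "P \<subseteq> S" "P \<noteq> {}"
    and "\<And>x y. x \<in> P \<Longrightarrow> y \<in> P \<Longrightarrow> f x = f y"
    and "\<And>x y. x \<in> P \<Longrightarrow> y \<in> S - P \<Longrightarrow> f x < f y"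
  shows "{x \<in> S. \<forall>y \<in> S. f x \<le> f y} = P"
proof (rule equalityI)
  show "{x \<in> S. \<forall>y \<in> S. f x \<le> f y} \<subseteq> P"
  proof clarify
    fix x assume x: "x \<in> S" "\<forall>y \<in> S. f x \<le> f y"
    obtain p where p: "p \<in> P" using assms(2) by blast
    show "x \<in> P"
    proof (rule ccontr)
      assume "x \<notin> P"
      then have "f p < f x" using assms(4)[OF p] x(1) by blast
      moreover have "f x \<le> f p" using x(2) p assms(1) by blast
      ultimately show False by simp
    qed
  qed
  show "P \<subseteq> {x \<in> S. \<forall>y \<in> S. f x \<le> f y}"
  proof
    fix x assume x: "x \<in> P"
    have "f x \<le> f y" if "y \<in> S" for y
      using assms(3)[OF x, of y] assms(4)[OF x, of y] that by (cases "y \<in> P") auto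
    then show "x \<in> {x \<in> S. \<forall>y \<in> S. f x \<le> f y}" using x assms(1) by blast
  qed
qed

lemma artanh_gt_self: "0 < x \<Longrightarrow> x < 1 \<Longrightarrow> x < artanh (x::real)"
proof -
  assume x: "0 < x" "x < 1"
  have "(\<lambda>x. artanh x - x) 0 < (\<lambda>x. artanh x - x) x"
  proof (rule DERIV_pos_inside_imp_increasing[where f = "\<lambda>x. artanh x - x" and f' = "\<lambda>x. 1 / (1 - x^2) - 1"])
    fix y :: real assume "0 \<le> y" "y \<le> x"
    then show "((\<lambda>x. artanh x - x) has_real_derivative 1 / (1 - y^2) - 1) (at y)"
      using x by (auto intro!: derivative_eq_intros)
  next
    fix y :: real assume "0 < y" "y < x"
    then have "0 < y^2" "y^2 < 1" using x by (auto simp: abs_square_less_1)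
    then show "0 < 1 / (1 - y^2) - 1" by (simp add: field_simps)
  qed (use x in auto)
  then show ?thesis by simp
qed

lemma artanh_lt: "0 < x \<Longrightarrow> x < 1 \<Longrightarrow> artanh (x::real) < x / (1 - x^2)"
proof -
  assume x: "0 < x" "x < 1"
  have "(\<lambda>x. x / (1 - x^2) - artanh x) 0 < (\<lambda>x. x / (1 - x^2) - artanh x) x"
  proof (rule DERIV_pos_inside_imp_increasing[where f = "\<lambda>x. x / (1 - x^2) - artanh x" and f' = "\<lambda>x. 2 * x^2 / (1 - x^2)^2"])
    fix y :: real assume y: "0 \<le> y" "y \<le> x"
    then have "\<bar>y\<bar> < 1" "y^2 < 1" using x by (auto simp: abs_square_less_1)
    have "((\<lambda>x. 1 - x^2) has_real_derivative - (2 * y)) (at y)"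
      by (auto intro!: derivative_eq_intros)
    then have "((\<lambda>x. x / (1 - x^2) - artanh x) has_real_derivative
        (1 * (1 - y^2) - y * (- (2 * y))) / ((1 - y^2) * (1 - y^2)) - 1 / (1 - y^2)) (at y)"
      using \<open>\<bar>y\<bar> < 1\<close> \<open>y^2 < 1\<close>
      by (intro DERIV_diff DERIV_divide DERIV_ident artanh_real_has_field_derivative) auto
    moreover have "\<And>w::real. w \<noteq> 0 \<Longrightarrow>
        (1 * w - y * (- (2 * y))) / (w * w) - 1 / w = 2 * y^2 / w^2"
      by (simp add: field_simps power2_eq_square)
    ultimately show "((\<lambda>x. x / (1 - x^2) - artanh x) has_real_derivative 2 * y^2 / (1 - y^2)^2) (at y)"
      using \<open>y^2 < 1\<close> by simp
  next
    fix y :: real assume "0 < y" "y < x"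
    then have "0 < y^2" "y^2 < 1" using x by (auto simp: abs_square_less_1)
    then show "0 < 2 * y^2 / (1 - y^2)^2" by simp
  qed (use x in auto)
  then show ?thesis by simp
qed

lemma artanh_over_self_strict_mono:
  assumes "0 < x" "x < y" "y < 1"
  shows "artanh x / x < artanh y / (y::real)"
proof (rule DERIV_pos_inside_imp_increasing[where f = "\<lambda>x. artanh x / x" and f' = "\<lambda>x. (x / (1 - x^2) - artanh x) / x^2"])
  fix z assume "x \<le> z" "z \<le> y"
  then have z: "0 < z" "\<bar>z\<bar> < 1" "z^2 < 1" using assms by (auto simp: abs_square_less_1)
  then have "((\<lambda>x. artanh x / x) has_real_derivative (1 / (1 - z^2) * z - artanh z * 1) / (z * z)) (at z)"
    by (intro DERIV_divide artanh_real_has_field_derivative DERIV_ident) auto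
  then show "((\<lambda>x. artanh x / x) has_real_derivative (z / (1 - z^2) - artanh z) / z^2) (at z)"
    by (rule DERIV_cong) (simp add: power2_eq_square)
next
  fix z assume "x < z" "z < y"
  then show "0 < (z / (1 - z^2) - artanh z) / z^2" using assms artanh_lt[of z] by simp
qed (use assms in auto)


section \<open>The free energy on the lines \<open>x\<^sub>1 + x\<^sub>2 = 2a\<close>\<close>

lemma vk_values: "vk 0 = (1, 0)" "vk 1 = (- 1/2, sqrt 3/2)" "vk 2 = (- 1/2, - sqrt 3/2)"
proof -
  show "vk 0 = (1, 0)" by (simp add: vk_def)
  show "vk 1 = (- 1/2, sqrt 3/2)" by (simp add: vk_def cos_120 sin_120)
  have "2 * pi * 2 / 3 = pi/3 + pi" by simp
  then have "cos (2 * pi * 2 / 3) = - 1/2" "sin (2 * pi * 2 / 3) = - sqrt 3/2"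
    by (simp_all only: cos_periodic_pi sin_periodic_pi cos_60 sin_60)
  then show "vk 2 = (- 1/2, - sqrt 3/2)" by (simp add: vk_def)
qed

definition Fbeta_sym :: "real \<Rightarrow> real \<Rightarrow> real \<Rightarrow> real" where
  "Fbeta_sym \<beta> a r = - (1/2) * (1 - 3*a)^2 + (1/\<beta>) * xlog3x (1 - 2*a) + r * (1 - 2*a) - r * a"

definition Fbeta_asym :: "real \<Rightarrow> real \<Rightarrow> real \<Rightarrow> real" where
  "Fbeta_asym \<beta> a d = - (3/2) * d^2 + (1/\<beta>) * (xlog3x (a + d) + xlog3x (a - d))"

lemma Fbeta_line: "Fbeta \<beta> (a + d, a - d) r = Fbeta_sym \<beta> a r + Fbeta_asym \<beta> a d"
proof -
  have sum3: "(\<Sum>k<3. g k) = g 0 + g 1 + g (2::nat)" for g :: "nat \<Rightarrow> real"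
    by (simp add: eval_nat_numeral)
  show ?thesis
    unfolding Fbeta_def Fbeta_sym_def Fbeta_asym_def Let_def sum3
    by (simp add: vk_values vk_values(2)[unfolded One_nat_def] algebra_simps power2_eq_square)
      (simp add: field_simps)
qed

lemma Fbeta_asym_even: "Fbeta_asym \<beta> a (- d) = Fbeta_asym \<beta> a d"
  unfolding Fbeta_asym_def by simp

lemma xlog3x_has_derivative:
  assumes "0 < t" shows "(xlog3x has_real_derivative ln (3*t) + 1) (at t)"
proof (rule has_field_derivative_transform_within_open[where S = "{0<..}" and f = "\<lambda>t. t * ln (3*t)"])
  show "((\<lambda>t. t * ln (3*t)) has_real_derivative ln (3*t) + 1) (at t)"
    using assms by (auto intro!: derivative_eq_intros)
qed (use assms in \<open>auto simp: xlog3x_def\<close>)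

lemma continuous_on_xlog3x: "continuous_on {0..} xlog3x"
  unfolding continuous_on_eq_continuous_within
proof
  fix x :: real assume x: "x \<in> {0..}"
  show "continuous (at x within {0..}) xlog3x"
  proof (cases "x = 0")
    case True
    have "((\<lambda>t::real. t * ln (3*t)) \<longlongrightarrow> 0) (at_right 0)" by real_asymp
    moreover have "eventually (\<lambda>t. t * ln (3*t) = xlog3x t) (at_right 0)"
      unfolding eventually_at_right_field by (auto simp: xlog3x_def intro: exI[of _ 1])
    ultimately have "(xlog3x \<longlongrightarrow> xlog3x 0) (at_right 0)"
      by (simp add: Lim_transform_eventually xlog3x_def)
    then show ?thesis using True by (simp add: continuous_within at_within_Ici_at_right)
  next
    case False
    then have "isCont xlog3x x" using x xlog3x_has_derivative DERIV_isCont by force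
    then show ?thesis by (rule continuous_at_imp_continuous_at_within)
  qed
qed

lemma Fbeta_asym_has_derivative:
  assumes "0 < a" "\<bar>d\<bar> < a"
  shows "(Fbeta_asym \<beta> a has_real_derivative - 3 * d + (2/\<beta>) * artanh (d/a)) (at d)"
proof -
  have pos: "0 < a + d" "0 < a - d" using assms by auto
  have "(1 + d/a) / (1 - d/a) = (3*(a+d)) / (3*(a-d))"
    using assms by (simp add: field_simps)
  then have log_ratio: "ln (3*(a+d)) - ln (3*(a-d)) = 2 * artanh (d/a)"
    using pos by (simp add: artanh_def ln_div)
  have d1: "((\<lambda>d. xlog3x (a + d)) has_real_derivative (ln (3*(a+d)) + 1) * 1) (at d)"
    by (rule DERIV_chain2[where f = xlog3x and g = "\<lambda>d. a + d", OF xlog3x_has_derivative[OF pos(1)]])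
      (auto intro!: derivative_eq_intros)
  have d2: "((\<lambda>d. xlog3x (a - d)) has_real_derivative (ln (3*(a-d)) + 1) * (- 1)) (at d)"
    by (rule DERIV_chain2[where f = xlog3x and g = "\<lambda>d. a - d", OF xlog3x_has_derivative[OF pos(2)]])
      (auto intro!: derivative_eq_intros)
  have "(Fbeta_asym \<beta> a has_real_derivative
      - (3/2) * (2 * d) + (1/\<beta>) * ((ln (3*(a+d)) + 1) * 1 + (ln (3*(a-d)) + 1) * (- 1))) (at d)"
    unfolding Fbeta_asym_def[abs_def] by (rule derivative_eq_intros d1 d2 refl | simp)+
  then show ?thesis
    by (rule DERIV_cong) (use log_ratio in \<open>simp add: algebra_simps\<close>)
qed

lemma continuous_on_Fbeta_asym: "continuous_on {-a..a} (Fbeta_asym \<beta> a)"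
proof -
  have "continuous_on {-a..a} (\<lambda>d. xlog3x (a + d))" "continuous_on {-a..a} (\<lambda>d. xlog3x (a - d))"
    by (auto intro!: continuous_on_compose2[OF continuous_on_xlog3x] continuous_intros)
  then show ?thesis unfolding Fbeta_asym_def[abs_def] by (intro continuous_intros)
qed

lemma Fbeta_asym_strict_min_at_0:
  assumes "0 < \<beta>" "0 < a" "\<beta> * a \<le> 2/3" "0 < d" "d \<le> a"
  shows "Fbeta_asym \<beta> a 0 < Fbeta_asym \<beta> a d"
proof (rule DERIV_sign_change_imp_strict_min[where f = "Fbeta_asym \<beta> a" and a = 0 and b = a and f' = "\<lambda>x. - 3 * x + (2/\<beta>) * artanh (x/a)"])
  show "continuous_on {0..a} (Fbeta_asym \<beta> a)"
    using continuous_on_subset[OF continuous_on_Fbeta_asym] assms by auto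
  fix x assume x: "0 < x" "x < a"
  then show "(Fbeta_asym \<beta> a has_real_derivative - 3 * x + (2/\<beta>) * artanh (x/a)) (at x)"
    using assms by (intro Fbeta_asym_has_derivative) auto
  have "x/a < artanh (x/a)" using x by (intro artanh_gt_self) auto
  then have "(2/\<beta>) * (x/a) < (2/\<beta>) * artanh (x/a)" using assms by (intro mult_strict_left_mono) auto
  moreover have "3 * (\<beta> * a) * x \<le> 2 * x" using assms x by (intro mult_right_mono) auto
  then have "3 * x \<le> (2/\<beta>) * (x/a)" using assms by (simp add: field_simps)
  ultimately show "0 < - 3 * x + (2/\<beta>) * artanh (x/a)" by simp
qed (use assms in auto)

lemma Fbeta_asym_strict_min_at_critical_point:
  assumes "0 < \<beta>" "0 < ds" "ds < a" and crit: "artanh (ds/a) = 3/2 * \<beta> * ds"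
    and "0 \<le> d" "d \<le> a" "d \<noteq> ds"
  shows "Fbeta_asym \<beta> a ds < Fbeta_asym \<beta> a d"
proof (rule DERIV_sign_change_imp_strict_min[where f = "Fbeta_asym \<beta> a" and a = 0 and b = a and f' = "\<lambda>x. - 3 * x + (2/\<beta>) * artanh (x/a)"])
  show "continuous_on {0..a} (Fbeta_asym \<beta> a)"
    using continuous_on_subset[OF continuous_on_Fbeta_asym] assms by auto
  show "(Fbeta_asym \<beta> a has_real_derivative - 3 * x + (2/\<beta>) * artanh (x/a)) (at x)"
    if "0 < x" "x < a" for x
    using that assms by (intro Fbeta_asym_has_derivative) auto
  have factor: "- 3 * x + (2/\<beta>) * artanh (x/a)
      = (2 * x / (\<beta> * a)) * (artanh (x/a) / (x/a) - artanh (ds/a) / (ds/a))"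
    and pos: "0 < 2 * x / (\<beta> * a)" if "0 < x" for x
    using that assms unfolding crit by (simp_all add: field_simps)
  show "- 3 * x + (2/\<beta>) * artanh (x/a) < 0" if "0 < x" "x < ds" for x
  proof -
    have "artanh (x/a) / (x/a) < artanh (ds/a) / (ds/a)"
      using that assms by (intro artanh_over_self_strict_mono) (auto simp: divide_strict_right_mono)
    then show ?thesis unfolding factor[OF that(1)] by (intro mult_pos_neg pos that) simp
  qed
  show "0 < - 3 * x + (2/\<beta>) * artanh (x/a)" if "ds < x" "x < a" for x
  proof -
    have "artanh (ds/a) / (ds/a) < artanh (x/a) / (x/a)"
      using that assms by (intro artanh_over_self_strict_mono) (auto simp: divide_strict_right_mono)
    moreover have "0 < x" using that assms by simp
    ultimately show ?thesis unfolding factor[OF \<open>0 < x\<close>] by (intro mult_pos_pos pos) simp_all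
  qed
qed (use assms in auto)

lemma Fbeta_argmin_on_line:
  fixes a ds :: real
  assumes "0 < a" "2 * a \<le> 1" "0 \<le> ds" "ds \<le> a"
    and min: "\<And>d. 0 \<le> d \<Longrightarrow> d \<le> a \<Longrightarrow> d \<noteq> ds \<Longrightarrow> Fbeta_asym \<beta> a ds < Fbeta_asym \<beta> a d"
  shows "{x \<in> {x. fst x + snd x = 2*a} \<inter> Xi. \<forall>y \<in> {x. fst x + snd x = 2*a} \<inter> Xi. Fbeta \<beta> x r \<le> Fbeta \<beta> y r}
       = {(a + ds, a - ds), (a - ds, a + ds)}"
proof (rule argmin_set_eqI)
  have F_abs: "Fbeta \<beta> (a + d, a - d) r = Fbeta_sym \<beta> a r + Fbeta_asym \<beta> a \<bar>d\<bar>" for d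
    using Fbeta_line Fbeta_asym_even by (cases "0 \<le> d") (auto simp: abs_if)
  show "{(a + ds, a - ds), (a - ds, a + ds)} \<subseteq> {x. fst x + snd x = 2*a} \<inter> Xi"
    using assms by (auto simp: Xi_def)
  show "\<And>x y. x \<in> {(a + ds, a - ds), (a - ds, a + ds)} \<Longrightarrow> y \<in> {(a + ds, a - ds), (a - ds, a + ds)} \<Longrightarrow>
      Fbeta \<beta> x r = Fbeta \<beta> y r"
    using F_abs[of ds] F_abs[of "- ds"] by auto
  fix x y
  assume x: "x \<in> {(a + ds, a - ds), (a - ds, a + ds)}"
    and y: "y \<in> {x. fst x + snd x = 2*a} \<inter> Xi - {(a + ds, a - ds), (a - ds, a + ds)}"
  define d where "d = (fst y - snd y) / 2"
  have "fst y + snd y = 2*a" using y by blast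
  then have y_eq: "y = (a + d, a - d)" by (auto simp: prod_eq_iff d_def field_simps)
  have "\<bar>d\<bar> \<le> a" "\<bar>d\<bar> \<noteq> ds" using y unfolding y_eq by (auto simp: Xi_def abs_if)
  then have "Fbeta_asym \<beta> a ds < Fbeta_asym \<beta> a \<bar>d\<bar>" by (intro min) auto
  then show "Fbeta \<beta> x r < Fbeta \<beta> y r"
    using x F_abs[of ds] F_abs[of "- ds"] F_abs[of d] assms(3) unfolding y_eq by auto
qed simp


section \<open>The threshold \<open>r2\<close> and the point \<open>pbeta\<close>\<close>

definition log_ratio :: "real \<Rightarrow> real" where "log_ratio t = ln ((1 - 2*t) / t)"

lemma log_ratio_pos: "0 < t \<Longrightarrow> t < 1/3 \<Longrightarrow> log_ratio t > 0"
  unfolding log_ratio_def by (subst ln_gt_zero_iff) (auto simp: field_simps)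

lemma log_ratio_has_derivative:
  "0 < t \<Longrightarrow> t < 1/2 \<Longrightarrow> (log_ratio has_real_derivative (- 1 / (t * (1 - 2*t)))) (at t)"
  unfolding log_ratio_def
  by (rule derivative_eq_intros refl | simp)+

lemma hfun_eq_log_ratio: "hfun t = - 3 * t * (1 - 2*t) * log_ratio t - 3 * t + 1"
  unfolding hfun_def log_ratio_def by simp

lemma hfun_has_derivative:
  assumes t: "0 < t" "t < 1/2"
  shows "(hfun has_real_derivative - 3 * (1 - 4*t) * log_ratio t) (at t)"
proof -
  have eq: "(- 3 * t * (1 - 2*t)) * (- 1 / (t * (1 - 2*t))) = 3" using t by (simp add: field_simps)
  have "(hfun has_real_derivative - 3 * (1 - 2*t) * log_ratio t + (- 3 * t) * (- 2) * log_ratio t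
      + (- 3 * t * (1 - 2*t)) * (- 1 / (t * (1 - 2*t))) - 3) (at t)"
    unfolding hfun_eq_log_ratio[abs_def]
    by (rule derivative_eq_intros log_ratio_has_derivative[OF t] refl | simp add: algebra_simps)+
  then show ?thesis by (rule DERIV_cong) (simp only: eq, simp add: algebra_simps)
qed

lemma hfun_strict_antimono: "0 < a \<Longrightarrow> a < b \<Longrightarrow> b \<le> 1/4 \<Longrightarrow> hfun b < hfun a"
proof (rule DERIV_neg_inside_imp_decreasing[where f = hfun and f' = "\<lambda>t. - 3 * (1 - 4*t) * log_ratio t"])
  fix x assume "0 < a" "a < b" "b \<le> 1/4" "a \<le> x" "x \<le> b"
  then show "(hfun has_real_derivative - 3 * (1 - 4*x) * log_ratio x) (at x)" by (intro hfun_has_derivative) auto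
next
  fix x assume "0 < a" "b \<le> 1/4" "a < x" "x < b"
  then have "log_ratio x > 0" "1 - 4*x > 0" by (auto intro!: log_ratio_pos)
  moreover have "- 3 * (1 - 4*x) < 0" using \<open>1 - 4*x > 0\<close> by simp
  ultimately show "- 3 * (1 - 4*x) * log_ratio x < 0" using mult_neg_pos by blast
qed

lemma hfun_one_third: "hfun (1/3) = 0"
  unfolding hfun_def by simp

lemma hfun_neg: "1/4 \<le> t \<Longrightarrow> t < 1/3 \<Longrightarrow> hfun t < 0"
proof -
  assume t: "1/4 \<le> t" "t < 1/3"
  have "hfun t < hfun (1/3)"
  proof (rule DERIV_pos_inside_imp_increasing[where f = hfun and f' = "\<lambda>t. - 3 * (1 - 4*t) * log_ratio t"])
    fix x assume "t \<le> x" "x \<le> 1/3"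
    then show "(hfun has_real_derivative - 3 * (1 - 4*x) * log_ratio x) (at x)" using t by (intro hfun_has_derivative) auto
  next
    fix x assume "t < x" "x < 1/3"
    then have "log_ratio x > 0" "1 - 4*x < 0" using t by (auto intro!: log_ratio_pos)
    moreover have "- 3 * (1 - 4*x) > 0" using \<open>1 - 4*x < 0\<close> by simp
    ultimately show "- 3 * (1 - 4*x) * log_ratio x > 0" using mult_pos_pos by blast
  qed (use t in auto)
  then show ?thesis by (simp add: hfun_one_third)
qed

lemma hfun_less: "0 < t \<Longrightarrow> t < 1/3 \<Longrightarrow> hfun t < 1 - 3*t"
  using log_ratio_pos[of t] unfolding hfun_eq_log_ratio by (simp add: mult_pos_pos)

lemma kfun_bounds: "0 < r \<Longrightarrow> r < 1 \<Longrightarrow> 0 < kfun r \<and> kfun r < 1/3"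
  unfolding kfun_def by auto

lemma continuous_on_hfun: "0 < a \<Longrightarrow> b < 1/2 \<Longrightarrow> continuous_on {a..b} hfun"
  by (rule continuous_at_imp_continuous_on) (auto intro!: DERIV_isCont hfun_has_derivative)

lemma hfun_pos_imp_less_quarter: "0 < t \<Longrightarrow> t < 1/3 \<Longrightarrow> hfun t > 0 \<Longrightarrow> t < 1/4"
  using hfun_neg[of t] by fastforce

lemma hfun_inj_below_quarter: "0 < t \<Longrightarrow> t \<le> 1/4 \<Longrightarrow> 0 < t' \<Longrightarrow> t' \<le> 1/4 \<Longrightarrow> hfun t = hfun t' \<Longrightarrow> t = t'"
  using hfun_strict_antimono[of t t'] hfun_strict_antimono[of t' t] by (cases t t' rule: linorder_cases) auto

lemma hfun_tendsto_1: "(hfun \<longlongrightarrow> 1) (at_right 0)"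
  unfolding hfun_def[abs_def] by real_asymp

lemma m0_exists:
  assumes r: "0 < r" "r < 1"
  shows "\<exists>t. 0 < t \<and> t < kfun r \<and> hfun t = r"
proof -
  define k where "k = kfun r"
  have k: "0 < k" "k < 1/3" using kfun_bounds[OF r] by (auto simp: k_def)
  have "eventually (\<lambda>t. r < hfun t) (at_right 0)"
    using order_tendstoD(1)[OF hfun_tendsto_1] r by simp
  moreover have "eventually (\<lambda>t. 0 < t \<and> t < k) (at_right 0)"
    unfolding eventually_at_right_field using k by blast
  ultimately obtain t0 where t0: "0 < t0" "t0 < k" "r < hfun t0"
    using eventually_happens'[OF trivial_limit_at_right_real] eventually_conj by blast
  have "1 - 3*k = r" by (simp add: k_def kfun_def field_simps)
  then have hk: "hfun k < r" using hfun_less[OF k] by simp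
  obtain t where t: "t0 \<le> t" "t \<le> k" "hfun t = r"
    using IVT2'[of hfun k r t0] hk t0 k continuous_on_hfun[of t0 k] by auto
  then have "t \<noteq> k" using hk by auto
  then show ?thesis using t t0 by (intro exI[of _ t]) (auto simp: k_def)
qed

lemma m0_unique: assumes r: "0 < r" "r < 1" and t: "0 < t" "t < kfun r" "hfun t = r"
  and t': "0 < t'" "t' < kfun r" "hfun t' = r"
  shows "t = t'"
proof -
  have k: "kfun r < 1/3" using kfun_bounds[OF r] by auto
  have "t < 1/4" "t' < 1/4" using hfun_pos_imp_less_quarter t t' r k by auto
  then show ?thesis using hfun_inj_below_quarter[of t t'] t t' by auto
qed

lemma m0_props: assumes r: "0 < r" "r < 1"
  shows "0 < m0 r \<and> m0 r < kfun r \<and> hfun (m0 r) = r \<and> m0 r < 1/4"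
proof -
  obtain t where t: "0 < t" "t < kfun r" "hfun t = r" using m0_exists[OF r] by blast
  have "m0 r = t" unfolding m0_def
    by (rule the_equality) (use t m0_unique[OF r] in auto)
  moreover have "t < 1/4" using hfun_pos_imp_less_quarter t r kfun_bounds[OF r] by auto
  ultimately show ?thesis using t by auto
qed

lemma m0_eq: "0 < r \<Longrightarrow> r < 1 \<Longrightarrow> 0 < t \<Longrightarrow> t < kfun r \<Longrightarrow> hfun t = r \<Longrightarrow> m0 r = t"
  using m0_props m0_unique by blast

lemma ffun_eq_log_ratio: "ffun r t = 2 / (3 * (1 - r - 3*t)) * log_ratio t"
  unfolding ffun_def log_ratio_def by simp

lemma ffun_has_derivative:
  assumes t: "0 < t" "t < 1/2" "1 - r - 3*t > 0"
  shows "(ffun r has_real_derivative (2/3) * (r - hfun t) / (t * (1 - 2*t) * (1 - r - 3*t)^2)) (at t)"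
proof -
  define D where "D = 1 - r - 3*t"
  define P where "P = t * (1 - 2*t)"
  have nz: "D \<noteq> 0" "P \<noteq> 0" using t by (auto simp: D_def P_def)
  have d1: "((\<lambda>t. 1 - r - 3*t) has_real_derivative (- 3)) (at t)"
    by (auto intro!: derivative_eq_intros)
  have d2: "((\<lambda>t. log_ratio t / (1 - r - 3*t)) has_real_derivative
      ((- 1 / P) * D - log_ratio t * (- 3)) / (D * D)) (at t)"
    using DERIV_divide[OF log_ratio_has_derivative[OF t(1,2)] d1] nz unfolding D_def P_def by simp
  have d3: "((\<lambda>t. (2/3) * (log_ratio t / (1 - r - 3*t))) has_real_derivative
      (2/3) * (((- 1 / P) * D - log_ratio t * (- 3)) / (D * D))) (at t)"
    by (rule DERIV_cmult[OF d2])
  have e1: "(- 1 / P) * D - log_ratio t * (- 3) = (r - hfun t) / P"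
    using nz unfolding hfun_eq_log_ratio D_def P_def by (simp add: field_simps)
  have e2: "(2/3) * (((- 1 / P) * D - log_ratio t * (- 3)) / (D * D)) = (2/3) * (r - hfun t) / (t * (1 - 2*t) * (1 - r - 3*t)^2)"
    unfolding e1 using nz by (simp add: D_def P_def power2_eq_square field_simps)
  have "ffun r = (\<lambda>t. (2/3) * (log_ratio t / (1 - r - 3*t)))"
    by (rule ext) (simp add: ffun_eq_log_ratio)
  then show ?thesis using d3 e2 by simp
qed

lemma continuous_on_ffun:
  assumes "0 < a" "b < kfun r" "r < 1" "0 < r"
  shows "continuous_on {a..b} (ffun r)"
proof (rule continuous_at_imp_continuous_on, intro ballI)
  fix x assume "x \<in> {a..b}"
  then have "(ffun r has_real_derivative (2/3) * (r - hfun x) / (x * (1 - 2*x) * (1 - r - 3*x)^2)) (at x)"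
    using assms by (intro ffun_has_derivative) (auto simp: kfun_def)
  then show "isCont (ffun r) x" by (rule DERIV_isCont)
qed

lemma hfun_less_beyond_m0:
  assumes r: "0 < r" "r < 1" and x: "m0 r < x" "x < kfun r"
  shows "hfun x < r"
proof (cases "x \<le> 1/4")
  case True then show ?thesis using m0_props[OF r] hfun_strict_antimono[of "m0 r" x] x by auto
next
  case False then show ?thesis using hfun_neg[of x] x kfun_bounds[OF r] r by auto
qed

lemma ffun_derivative_denominator_pos:
  assumes "0 < t" "t < kfun r" "r < 1" "0 < r"
  shows "t * (1 - 2*t) * (1 - r - 3*t)^2 > 0"
proof -
  have p: "1 - 2*t > 0" "1 - r - 3*t > 0" using assms by (auto simp: kfun_def)
  then show ?thesis using p assms(1) by simp
qed

lemma ffun_strict_mono: assumes r: "0 < r" "r < 1" and ab: "m0 r \<le> a" "a < b" "b < kfun r"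
  shows "ffun r a < ffun r b"
proof (rule DERIV_pos_inside_imp_increasing[where f = "ffun r" and f' = "\<lambda>t. (2/3) * (r - hfun t) / (t * (1 - 2*t) * (1 - r - 3*t)^2)"])
  fix x assume x: "a \<le> x" "x \<le> b"
  then show "(ffun r has_real_derivative (2/3) * (r - hfun x) / (x * (1 - 2*x) * (1 - r - 3*x)^2)) (at x)"
    using m0_props[OF r] ab r by (intro ffun_has_derivative) (auto simp: kfun_def)
next
  fix x assume x: "a < x" "x < b"
  then have "r - hfun x > 0" using hfun_less_beyond_m0[OF r, of x] ab by auto
  moreover have "0 < x" "x < kfun r" using x ab m0_props[OF r] by auto
  ultimately show "(2/3) * (r - hfun x) / (x * (1 - 2*x) * (1 - r - 3*x)^2) > 0"
    using ffun_derivative_denominator_pos[of x r] r by (intro divide_pos_pos) auto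
qed (use ab in auto)

lemma ffun_at_hfun_root: assumes "0 < t" "t < 1/3" "hfun t = r"
  shows "ffun r t = 2 / (9 * t * (1 - 2*t))"
proof -
  have L: "log_ratio t > 0" using log_ratio_pos assms by auto
  have "1 - r - 3*t = 3 * t * (1 - 2*t) * log_ratio t" using assms(3) unfolding hfun_eq_log_ratio by (simp add: algebra_simps)
  then have "ffun r t = 2 / (3 * (3 * t * (1 - 2*t) * log_ratio t)) * log_ratio t" unfolding ffun_eq_log_ratio by simp
  also have "\<dots> = 2 / (9 * t * (1 - 2*t))" using L assms by (simp add: field_simps)
  finally show ?thesis .
qed

lemma ffun_m0: "0 < r \<Longrightarrow> r < 1 \<Longrightarrow> ffun r (m0 r) = 2 / (9 * m0 r * (1 - 2 * m0 r))"
  using m0_props[of r] by (intro ffun_at_hfun_root) auto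

text \<open>By \<open>ffun_m0\<close>, the equation defining \<open>r2 \<beta>\<close> says \<open>9 m0 (1 - 2 m0) = 2/\<beta>\<close>,
  so \<open>m0 (r2 \<beta>) = tstar \<beta>\<close>.\<close>

definition tstar :: "real \<Rightarrow> real" where
  "tstar \<beta> = (9 - sqrt (81 - 144/\<beta>)) / 36"

lemma tstar_props: assumes b: "\<beta> > 2"
  shows "0 < tstar \<beta> \<and> tstar \<beta> < 1/6 \<and> 9 * tstar \<beta> * (1 - 2 * tstar \<beta>) = 2/\<beta>"
proof -
  define q where "q = sqrt (81 - 144/\<beta>)"
  have "144/\<beta> < 72" using b by (simp add: field_simps)
  then have a1: "81 - 144/\<beta> > 9" by simp
  have a2: "144/\<beta> > 0" using b by simp
  have q2: "q^2 = 81 - 144/\<beta>" using a1 by (simp add: q_def)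
  have "q > 3" unfolding q_def using a1 real_less_rsqrt[of 3 "81 - 144/\<beta>"] by simp
  moreover have "q < 9" unfolding q_def using a2 real_sqrt_less_iff[of "81 - 144/\<beta>" 81] by simp
  moreover have "9 * ((9 - q)/36) * (1 - 2 * ((9 - q)/36)) = 2/\<beta>"
  proof -
    have "9 * ((9 - q)/36) * (1 - 2 * ((9 - q)/36)) = (81 - q^2)/72"
      by (simp add: field_simps power2_eq_square)
    then show ?thesis using q2 by simp
  qed
  ultimately show ?thesis unfolding tstar_def q_def[symmetric] by auto
qed

lemma ln_2_less: "ln (2::real) < 3/4"
proof -
  have "1 + 3/4 + (3/4)^2/2 \<le> exp (3/4::real)" by (rule exp_lower_Taylor_quadratic) simp
  then have "2 < exp (3/4::real)" by (simp add: power2_eq_square)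
  then show ?thesis by (metis exp_less_cancel_iff exp_ln zero_less_numeral)
qed

lemma hfun_one_sixth_pos: "hfun (1/6) > 0"
proof -
  have "hfun (1/6) = 1/2 - (1/3) * ln 4" unfolding hfun_def by simp
  moreover have "ln (4::real) = 2 * ln 2"
    using ln_mult[of 2 2] by simp
  ultimately show ?thesis using ln_2_less by simp
qed

lemma parabola_strict_mono:
  fixes m t :: real
  assumes "0 < t" "t < m" "m < 1/4"
  shows "9 * t * (1 - 2*t) < 9 * m * (1 - 2*m)"
proof -
  have "9 * m * (1 - 2*m) - 9 * t * (1 - 2*t) = 9 * (m - t) * (1 - 2*(m+t))"
    by (simp add: algebra_simps)
  moreover have "9 * (m - t) * (1 - 2*(m+t)) > 0" using assms by (intro mult_pos_pos) auto
  ultimately show ?thesis by simp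
qed

lemma parabola_inj:
  fixes m t :: real
  assumes "0 < m" "m < 1/4" "0 < t" "t < 1/4" "9 * m * (1 - 2*m) = 9 * t * (1 - 2*t)"
  shows "m = t"
  using parabola_strict_mono[of m t] parabola_strict_mono[of t m] assms
  by (cases m t rule: linorder_cases) auto

lemma r2_eq: assumes b: "\<beta> > 2"
  shows "r2 \<beta> = hfun (tstar \<beta>) \<and> 0 < r2 \<beta> \<and> r2 \<beta> < 1"
proof -
  define t where "t = tstar \<beta>"
  define R where "R = hfun t"
  have t: "0 < t" "t < 1/6" "9 * t * (1 - 2*t) = 2/\<beta>" using tstar_props[OF b] by (auto simp: t_def)
  have R0: "0 < R" using hfun_strict_antimono[of t "1/6"] hfun_one_sixth_pos t by (auto simp: R_def)
  have R1: "R < 1 - 3*t" using hfun_less[of t] t by (simp add: R_def)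
  then have R1': "R < 1" using t by simp
  have tk: "t < kfun R" using R1 by (simp add: kfun_def)
  have m0R: "m0 R = t" using m0_eq[OF R0 R1' t(1) tk] by (simp add: R_def)
  have fR: "ffun R (m0 R) = \<beta>" using ffun_m0[OF R0 R1'] m0R t b by simp
  have "r2 \<beta> = R" unfolding r2_def
  proof (rule the_equality)
    show "0 < R \<and> R < 1 \<and> ffun R (m0 R) = \<beta>" using R0 R1' fR by auto
  next
    fix r assume r: "0 < r \<and> r < 1 \<and> ffun r (m0 r) = \<beta>"
    then have r': "0 < r" "r < 1" by auto
    have m: "0 < m0 r" "m0 r < 1/4" "hfun (m0 r) = r" using m0_props[OF r'] by auto
    have "2 / (9 * m0 r * (1 - 2 * m0 r)) = \<beta>" using r ffun_m0[OF r'] by simp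
    then have "9 * m0 r * (1 - 2 * m0 r) = 2/\<beta>" using b m by (simp add: field_simps)
    then have "m0 r = t" using parabola_inj[of "m0 r" t] m t by simp
    then show "r = R" using m by (simp add: R_def)
  qed
  then show ?thesis using R0 R1' by (simp add: R_def t_def)
qed

lemma log_ratio_antimono: "0 < t \<Longrightarrow> t \<le> k \<Longrightarrow> k < 1/2 \<Longrightarrow> log_ratio k \<le> log_ratio t"
  unfolding log_ratio_def by (subst ln_le_cancel_iff) (auto simp: field_simps intro: mult_right_mono)

lemma tstar_less_m0: assumes b: "\<beta> > 2" and r: "0 < r" "r < r2 \<beta>"
  shows "tstar \<beta> < m0 r"
proof -
  have R: "r2 \<beta> = hfun (tstar \<beta>)" "r2 \<beta> < 1" using r2_eq[OF b] by auto
  have r1: "r < 1" using r R by simp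
  have t: "0 < tstar \<beta>" "tstar \<beta> < 1/6" using tstar_props[OF b] by auto
  have m: "0 < m0 r" "m0 r < 1/4" "hfun (m0 r) = r" using m0_props[OF r(1) r1] by auto
  show ?thesis
  proof (rule ccontr)
    assume "\<not> ?thesis"
    then have "m0 r \<le> tstar \<beta>" by simp
    then have "hfun (tstar \<beta>) \<le> hfun (m0 r)"
      using hfun_strict_antimono[of "m0 r" "tstar \<beta>"] m t by (cases "m0 r = tstar \<beta>") auto
    then show False using m R r by simp
  qed
qed

lemma ffun_m0_less:
  assumes b: "\<beta> > 2" and r: "0 < r" "r < r2 \<beta>"
  shows "ffun r (m0 r) < \<beta>"
proof -
  have r1: "r < 1" using r r2_eq[OF b] by simp
  define m where "m = m0 r"
  have m: "0 < m" "m < 1/4" using m0_props[OF r(1) r1] by (auto simp: m_def)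
  have t: "0 < tstar \<beta>" "9 * tstar \<beta> * (1 - 2 * tstar \<beta>) = 2/\<beta>" using tstar_props[OF b] by auto
  have "2/\<beta> < 9 * m * (1 - 2*m)"
    using parabola_strict_mono[OF t(1) tstar_less_m0[OF b r] m(2)[unfolded m_def]] t by (simp add: m_def)
  moreover have "0 < 9 * m * (1 - 2*m)" using m by simp
  ultimately have "2 / (9 * m * (1 - 2*m)) < \<beta>" using b by (simp add: field_simps)
  then show ?thesis using ffun_m0[OF r(1) r1] by (simp add: m_def)
qed

lemma ffun_large_near_kfun:
  assumes r: "0 < r" "r < 1" and m: "0 < m" "m < kfun r" and b: "0 < \<beta>"
  shows "\<exists>t. m < t \<and> t < kfun r \<and> \<beta> \<le> ffun r t"
proof -
  define k where "k = kfun r"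
  have k: "0 < k" "k < 1/3" using kfun_bounds[OF r] by (auto simp: k_def)
  define Lk where "Lk = log_ratio k"
  have Lk: "Lk > 0" using log_ratio_pos k by (simp add: Lk_def)
  define \<delta> where "\<delta> = min ((k - m)/2) (Lk / (9*\<beta>))"
  have d: "0 < \<delta>" "\<delta> \<le> (k - m)/2" "\<delta> \<le> Lk / (9*\<beta>)"
    using m Lk b unfolding \<delta>_def k_def by (auto simp: min_def)
  define t where "t = k - \<delta>"
  have t: "m < t" "t < k" "0 < t" using d m by (auto simp: t_def k_def)
  have D: "1 - r - 3*t = 3*\<delta>" by (simp add: t_def k_def kfun_def field_simps)
  have "\<beta> \<le> 2 / (9*\<delta>) * Lk" using d b Lk by (simp add: field_simps)
  also have "\<dots> \<le> 2 / (9*\<delta>) * log_ratio t"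
    using log_ratio_antimono[of t k] t k d unfolding Lk_def by (intro mult_left_mono) auto
  also have "\<dots> = ffun r t" unfolding ffun_eq_log_ratio D by simp
  finally show ?thesis using t by (auto simp: k_def)
qed

lemma ubeta_exists:
  assumes b: "\<beta> > 2" and r: "0 < r" "r < r2 \<beta>"
  shows "\<exists>u. m0 r < u \<and> u < kfun r \<and> ffun r u = \<beta>"
proof -
  have r1: "r < 1" using r r2_eq[OF b] by simp
  have m: "0 < m0 r" "m0 r < kfun r" using m0_props[OF r(1) r1] by auto
  have "0 < \<beta>" using b by simp
  then obtain t where t: "m0 r < t" "t < kfun r" "\<beta> \<le> ffun r t"
    using ffun_large_near_kfun[OF r(1) r1 m] by blast
  have f_m0: "ffun r (m0 r) < \<beta>" by (rule ffun_m0_less[OF b r])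
  obtain u where u: "m0 r \<le> u" "u \<le> t" "ffun r u = \<beta>"
    using IVT'[of "ffun r" "m0 r" \<beta> t] f_m0 t m continuous_on_ffun[of "m0 r" t r] r r1 by auto
  then have "u \<noteq> m0 r" using f_m0 by auto
  then show ?thesis using u t by (intro exI[of _ u]) auto
qed

lemma ubeta_props: assumes b: "\<beta> > 2" and r: "0 < r" "r < r2 \<beta>"
  shows "m0 r < ubeta \<beta> r \<and> ubeta \<beta> r < kfun r \<and> ffun r (ubeta \<beta> r) = \<beta>"
proof -
  have r1: "r < 1" using r r2_eq[OF b] by simp
  obtain u where u: "m0 r < u" "u < kfun r" "ffun r u = \<beta>" using ubeta_exists[OF b r] by blast
  have "ubeta \<beta> r = u" unfolding ubeta_def
  proof (rule the_equality)
    fix v assume "m0 r < v \<and> v < kfun r \<and> ffun r v = \<beta>"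
    then show "v = u"
      using ffun_strict_mono[OF r(1) r1, of v u] ffun_strict_mono[OF r(1) r1, of u v] u
      by (cases v u rule: linorder_cases) auto
  qed (use u in auto)
  then show ?thesis using u by simp
qed

lemma r1_nonneg: assumes b: "\<beta> > 2" shows "r1 \<beta> \<ge> 0"
proof -
  have x: "3*\<beta>/2 - 2 > 0" using b by simp
  have "ln (3*\<beta>/2 - 2) \<le> 3*\<beta>/2 - 2 - 1" using ln_le_minus_one[OF x] .
  then have "2/(3*\<beta>) * ln (3*\<beta>/2 - 2) \<le> 2/(3*\<beta>) * (3*\<beta>/2 - 3)"
    using b by (intro mult_left_mono) auto
  also have "\<dots> = 1 - 2/\<beta>" using b by (simp add: field_simps)
  finally show ?thesis unfolding r1_def by simp
qed

lemma lbeta_bounds: "\<beta> > 2 \<Longrightarrow> 0 < lbeta \<beta> \<and> lbeta \<beta> < 1/3"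
  by (auto simp: lbeta_def field_simps)

lemma log_ratio_lbeta: "\<beta> > 2 \<Longrightarrow> log_ratio (lbeta \<beta>) = ln (3*\<beta>/2 - 2)"
  unfolding log_ratio_def lbeta_def by (simp add: field_simps)

lemma r1_eq_log_ratio: "\<beta> > 2 \<Longrightarrow> r1 \<beta> = 1 - 3 * lbeta \<beta> - lbeta \<beta> * log_ratio (lbeta \<beta>)"
  unfolding r1_def using log_ratio_lbeta[of \<beta>] by (simp add: lbeta_def)

lemma hfun_lbeta_less_r1:
  assumes b: "\<beta> > 2" shows "hfun (lbeta \<beta>) < r1 \<beta>"
proof -
  define l where "l = lbeta \<beta>"
  have l: "0 < l" "l < 1/3" using b by (auto simp: l_def lbeta_def field_simps)
  have "r1 \<beta> - hfun l = log_ratio l * l * (2 - 6*l)"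
    unfolding hfun_eq_log_ratio r1_eq_log_ratio[OF b] l_def by (simp add: algebra_simps)
  moreover have "log_ratio l * l * (2 - 6*l) > 0" using log_ratio_pos l by (intro mult_pos_pos) auto
  ultimately show ?thesis by (simp add: l_def)
qed

lemma ffun_lbeta_gt:
  assumes b: "\<beta> > 2" and r: "r1 \<beta> < r" and lk: "lbeta \<beta> < kfun r"
  shows "\<beta> < ffun r (lbeta \<beta>)"
proof -
  define l where "l = lbeta \<beta>"
  have l: "3*l = 2/\<beta>" using b by (simp add: l_def lbeta_def field_simps)
  have D: "1 - r - 3*l > 0" using lk by (simp add: l_def kfun_def)
  have "\<beta> * (1 - r - 3*l) < \<beta> * (l * log_ratio l)"
    using r r1_eq_log_ratio[OF b] b by (intro mult_strict_left_mono) (auto simp: l_def)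
  also have "\<dots> = 2/3 * log_ratio l" using l b by (simp add: field_simps)
  finally show ?thesis unfolding ffun_eq_log_ratio l_def[symmetric] using D by (simp add: field_simps)
qed

lemma ubeta_less_lbeta:
  assumes b: "\<beta> > 2" and r: "r1 \<beta> < r" "r < r2 \<beta>"
  shows "ubeta \<beta> r < lbeta \<beta>"
proof (cases "kfun r \<le> lbeta \<beta>")
  case True
  then show ?thesis using ubeta_props[OF b _ r(2)] r r1_nonneg[OF b] by fastforce
next
  case False
  have r0: "0 < r" "r < 1" using r r1_nonneg[OF b] r2_eq[OF b] by auto
  have u: "m0 r < ubeta \<beta> r" "ubeta \<beta> r < kfun r" "ffun r (ubeta \<beta> r) = \<beta>"
    using ubeta_props[OF b r0(1) r(2)] by auto
  have m: "0 < m0 r" "hfun (m0 r) = r" using m0_props[OF r0] by auto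
  have "hfun (lbeta \<beta>) < hfun (m0 r)" using hfun_lbeta_less_r1[OF b] r m by simp
  then have "m0 r < lbeta \<beta>"
    using hfun_strict_antimono[of "lbeta \<beta>" "m0 r"] lbeta_bounds[OF b] m0_props[OF r0]
    by (cases "m0 r" "lbeta \<beta>" rule: linorder_cases) auto
  moreover have "ffun r (ubeta \<beta> r) < ffun r (lbeta \<beta>)" using ffun_lbeta_gt[OF b r(1)] False u by simp
  ultimately show ?thesis
    using ffun_strict_mono[OF r0, of "lbeta \<beta>" "ubeta \<beta> r"] u False
    by (cases "ubeta \<beta> r" "lbeta \<beta>" rule: linorder_cases) auto
qed


section \<open>The level sets of \<open>Gfun\<close> and the point \<open>y1\<close>\<close>

lemma Gfun_has_derivative: "\<beta> > 0 \<Longrightarrow> x > 0 \<Longrightarrow> (Gfun \<beta> has_real_derivative (1/(\<beta>*x) - 3/2)) (at x)"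
  unfolding Gfun_def[abs_def] by (auto intro!: derivative_eq_intros simp: field_simps)

lemma continuous_on_Gfun: "\<beta> > 0 \<Longrightarrow> 0 < a \<Longrightarrow> continuous_on {a..b} (Gfun \<beta>)"
  by (rule continuous_at_imp_continuous_on) (auto intro!: DERIV_isCont Gfun_has_derivative)

lemma Gfun_strict_mono:
  assumes b: "\<beta> > 2" and xy: "0 < x" "x < y" "y \<le> lbeta \<beta>"
  shows "Gfun \<beta> x < Gfun \<beta> y"
proof (rule DERIV_pos_inside_imp_increasing[where f = "Gfun \<beta>" and f' = "\<lambda>x. 1/(\<beta>*x) - 3/2"])
  fix z assume "x \<le> z" "z \<le> y" then show "(Gfun \<beta> has_real_derivative 1/(\<beta>*z) - 3/2) (at z)"
    using xy b by (intro Gfun_has_derivative) auto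
next
  fix z assume z: "x < z" "z < y"
  then have "\<beta>*z < \<beta> * lbeta \<beta>" using xy b by (intro mult_strict_left_mono) auto
  then have "\<beta>*z < 2/3" using b by (simp add: lbeta_def)
  then show "1/(\<beta>*z) - 3/2 > 0" using z xy b by (simp add: field_simps)
qed (use xy in auto)

lemma Gfun_strict_antimono:
  assumes b: "\<beta> > 2" and xy: "lbeta \<beta> \<le> x" "x < y"
  shows "Gfun \<beta> y < Gfun \<beta> x"
proof (rule DERIV_neg_inside_imp_decreasing[where f = "Gfun \<beta>" and f' = "\<lambda>x. 1/(\<beta>*x) - 3/2"])
  have l: "0 < lbeta \<beta>" using lbeta_bounds[OF b] by simp
  fix z assume "x \<le> z" "z \<le> y" then show "(Gfun \<beta> has_real_derivative 1/(\<beta>*z) - 3/2) (at z)"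
    using xy l b by (intro Gfun_has_derivative) auto
next
  have l: "0 < lbeta \<beta>" using lbeta_bounds[OF b] by simp
  fix z assume z: "x < z" "z < y"
  then have "\<beta>*z > \<beta> * lbeta \<beta>" using xy b by (intro mult_strict_left_mono) auto
  then have "\<beta>*z > 2/3" using b by (simp add: lbeta_def)
  then show "1/(\<beta>*z) - 3/2 < 0" using z xy b l by (simp add: field_simps)
qed (use xy in auto)

lemma Gfun_le_gbeta:
  assumes b: "\<beta> > 2" and x: "0 < x"
  shows "Gfun \<beta> x \<le> gbeta \<beta>"
  using Gfun_strict_mono[OF b x, of "lbeta \<beta>"] Gfun_strict_antimono[OF b _, of "lbeta \<beta>" x] unfolding gbeta_def
  by (cases "x < lbeta \<beta>"; cases "x = lbeta \<beta>") auto

lemma Gfun_less_neg: assumes b: "\<beta> > 2" and x: "0 < x" shows "Gfun \<beta> x < - x"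
proof -
  have "ln x < x" using x by simp
  then have A: "ln x / \<beta> < x / \<beta>" using b by (intro divide_strict_right_mono) auto
  have B: "x / \<beta> < x / 2" using b x by (intro divide_strict_left_mono) auto
  have "Gfun \<beta> x = ln x / \<beta> - 3/2*x" by (simp add: Gfun_def)
  then show ?thesis using A B by linarith
qed

lemma Hfun_exists: assumes b: "\<beta> > 2" and y: "y \<le> gbeta \<beta>"
  shows "\<exists>x. 0 < x \<and> x \<le> lbeta \<beta> \<and> Gfun \<beta> x = y"
proof -
  define l where "l = lbeta \<beta>"
  have l: "0 < l" using lbeta_bounds[OF b] by (simp add: l_def)
  define x0 where "x0 = exp (\<beta> * y)"
  have x0: "0 < x0" by (simp add: x0_def)
  have Gx0: "Gfun \<beta> x0 < y" using x0 b unfolding Gfun_def x0_def by simp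
  have x0l: "x0 < l"
  proof (rule ccontr)
    assume "\<not> x0 < l"
    then have "ln l \<le> ln x0" using l by simp
    then have "ln l \<le> \<beta> * y" by (simp add: x0_def)
    then have "ln l / \<beta> \<le> y" using b by (simp add: field_simps)
    moreover have "gbeta \<beta> < ln l / \<beta>" using l b unfolding gbeta_def Gfun_def l_def by simp
    ultimately show False using y by simp
  qed
  obtain x where "x0 \<le> x" "x \<le> l" "Gfun \<beta> x = y"
    using IVT'[of "Gfun \<beta>" x0 y l] Gx0 y x0l continuous_on_Gfun[of \<beta> x0 l] b x0 by (auto simp: gbeta_def l_def)
  then show ?thesis using x0 by (intro exI[of _ x]) (auto simp: l_def)
qed

lemma Kfun_exists: assumes b: "\<beta> > 2" and y: "y \<le> gbeta \<beta>"
  shows "\<exists>x. lbeta \<beta> \<le> x \<and> Gfun \<beta> x = y"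
proof -
  define l where "l = lbeta \<beta>"
  have l: "0 < l" using lbeta_bounds[OF b] by (simp add: l_def)
  define x1 where "x1 = max l (- y)"
  have x1: "l \<le> x1" "0 < x1" using l by (auto simp: x1_def)
  have "Gfun \<beta> x1 < - x1" using Gfun_less_neg[OF b x1(2)] .
  then have Gx1: "Gfun \<beta> x1 \<le> y" by (simp add: x1_def)
  obtain x where "l \<le> x" "x \<le> x1" "Gfun \<beta> x = y"
    using IVT2'[of "Gfun \<beta>" x1 y l] Gx1 y x1 continuous_on_Gfun[of \<beta> l x1] b l by (auto simp: gbeta_def l_def)
  then show ?thesis by (auto simp: l_def)
qed

lemma Hfun_unique:
  assumes b: "\<beta> > 2" and "0 < x" "x \<le> lbeta \<beta>" "0 < x'" "x' \<le> lbeta \<beta>" "Gfun \<beta> x = Gfun \<beta> x'"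
  shows "x = x'"
  using Gfun_strict_mono[OF b, of x x'] Gfun_strict_mono[OF b, of x' x] assms by (cases x x' rule: linorder_cases) auto

lemma Kfun_unique:
  assumes b: "\<beta> > 2" and "lbeta \<beta> \<le> x" "lbeta \<beta> \<le> x'" "Gfun \<beta> x = Gfun \<beta> x'"
  shows "x = x'"
  using Gfun_strict_antimono[OF b, of x x'] Gfun_strict_antimono[OF b, of x' x] assms by (cases x x' rule: linorder_cases) auto

lemma Hfun_props: assumes b: "\<beta> > 2" and y: "y \<le> gbeta \<beta>"
  shows "0 < Hfun \<beta> y \<and> Hfun \<beta> y \<le> lbeta \<beta> \<and> Gfun \<beta> (Hfun \<beta> y) = y"
proof -
  obtain x where x: "0 < x" "x \<le> lbeta \<beta>" "Gfun \<beta> x = y" using Hfun_exists[OF b y] by blast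
  have "Hfun \<beta> y = x" unfolding Hfun_def
    by (rule the_equality) (use x Hfun_unique[OF b] in auto)
  then show ?thesis using x by simp
qed

lemma Kfun_props: assumes b: "\<beta> > 2" and y: "y \<le> gbeta \<beta>"
  shows "lbeta \<beta> \<le> Kfun \<beta> y \<and> Gfun \<beta> (Kfun \<beta> y) = y"
proof -
  obtain x where x: "lbeta \<beta> \<le> x" "Gfun \<beta> x = y" using Kfun_exists[OF b y] by blast
  have "Kfun \<beta> y = x" unfolding Kfun_def
    by (rule the_equality) (use x Kfun_unique[OF b] in auto)
  then show ?thesis using x by simp
qed

lemma Hfun_Gfun:
  assumes b: "\<beta> > 2" and x: "0 < x" "x \<le> lbeta \<beta>"
  shows "Hfun \<beta> (Gfun \<beta> x) = x"
  using Hfun_props[OF b Gfun_le_gbeta[OF b x(1)]] Hfun_unique[OF b] x by blast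

lemma Kfun_Gfun:
  assumes b: "\<beta> > 2" and x: "lbeta \<beta> \<le> x"
  shows "Kfun \<beta> (Gfun \<beta> x) = x"
proof -
  have "0 < x" using x lbeta_bounds[OF b] by simp
  then show ?thesis using Kfun_props[OF b Gfun_le_gbeta[OF b]] Kfun_unique[OF b] x by blast
qed

lemma Gfun_eq_imp_ln_ratio:
  assumes "0 < \<beta>" "0 < H" "0 < K" "Gfun \<beta> H = Gfun \<beta> K"
  shows "ln (K / H) = 3/2 * \<beta> * (K - H)"
proof -
  have "(1/\<beta>) * ln H - 3/2 * H = (1/\<beta>) * ln K - 3/2 * K" using assms(4) unfolding Gfun_def .
  then have "ln K - ln H = 3/2 * \<beta> * (K - H)" using assms(1) by (simp add: field_simps)
  then show ?thesis using assms by (simp add: ln_div)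
qed

lemma Hfun_Kfun_gbeta:
  assumes b: "\<beta> > 2"
  shows "Hfun \<beta> (gbeta \<beta>) = lbeta \<beta>" "Kfun \<beta> (gbeta \<beta>) = lbeta \<beta>"
  using Hfun_Gfun[OF b, of "lbeta \<beta>"] Kfun_Gfun[OF b, of "lbeta \<beta>"] lbeta_bounds[OF b] by (auto simp: gbeta_def)

lemma Hfun_Kfun_below_gbeta: assumes b: "\<beta> > 2" and y: "y < gbeta \<beta>"
  shows "Hfun \<beta> y < lbeta \<beta>" "lbeta \<beta> < Kfun \<beta> y"
  using Hfun_props[OF b, of y] Kfun_props[OF b, of y] y by (auto simp: gbeta_def less_le)

lemma Hfun_strict_mono:
  assumes b: "\<beta> > 2" and y: "y < y'" "y' \<le> gbeta \<beta>"
  shows "Hfun \<beta> y < Hfun \<beta> y'"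
proof (rule ccontr)
  have h: "0 < Hfun \<beta> y" "Hfun \<beta> y \<le> lbeta \<beta>" "Gfun \<beta> (Hfun \<beta> y) = y" using Hfun_props[OF b, of y] y by auto
  have h': "0 < Hfun \<beta> y'" "Hfun \<beta> y' \<le> lbeta \<beta>" "Gfun \<beta> (Hfun \<beta> y') = y'" using Hfun_props[OF b, of y'] y by auto
  assume "\<not> ?thesis"
  then have "Hfun \<beta> y' \<le> Hfun \<beta> y" by simp
  then have "Gfun \<beta> (Hfun \<beta> y') \<le> Gfun \<beta> (Hfun \<beta> y)"
    using Gfun_strict_mono[OF b h'(1), of "Hfun \<beta> y"] h by (cases "Hfun \<beta> y' = Hfun \<beta> y") auto
  then show False using h h' y by simp
qed

lemma Kfun_strict_antimono:
  assumes b: "\<beta> > 2" and y: "y < y'" "y' \<le> gbeta \<beta>"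
  shows "Kfun \<beta> y' < Kfun \<beta> y"
proof (rule ccontr)
  have h: "lbeta \<beta> \<le> Kfun \<beta> y" "Gfun \<beta> (Kfun \<beta> y) = y" using Kfun_props[OF b, of y] y by auto
  have h': "lbeta \<beta> \<le> Kfun \<beta> y'" "Gfun \<beta> (Kfun \<beta> y') = y'" using Kfun_props[OF b, of y'] y by auto
  assume "\<not> ?thesis"
  then have "Kfun \<beta> y \<le> Kfun \<beta> y'" by simp
  then have "Gfun \<beta> (Kfun \<beta> y') \<le> Gfun \<beta> (Kfun \<beta> y)"
    using Gfun_strict_antimono[OF b h(1), of "Kfun \<beta> y'"] by (cases "Kfun \<beta> y' = Kfun \<beta> y") auto
  then show False using h h' y by simp
qed

lemma continuous_on_Kfun:
  assumes b: "\<beta> > 2" and ya: "ya \<le> gbeta \<beta>"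
  shows "continuous_on {ya..gbeta \<beta>} (Kfun \<beta>)"
proof -
  have l: "0 < lbeta \<beta>" using lbeta_bounds[OF b] by simp
  define S where "S = {lbeta \<beta> .. Kfun \<beta> ya}"
  have c: "continuous_on (Gfun \<beta> ` S) (Kfun \<beta>)"
  proof (rule continuous_on_inv)
    show "continuous_on S (Gfun \<beta>)" unfolding S_def using b l by (intro continuous_on_Gfun) auto
    show "compact S" unfolding S_def by simp
    show "\<forall>x\<in>S. Kfun \<beta> (Gfun \<beta> x) = x" unfolding S_def using Kfun_Gfun[OF b] by auto
  qed
  have "{ya..gbeta \<beta>} \<subseteq> Gfun \<beta> ` S"
  proof
    fix y assume y: "y \<in> {ya..gbeta \<beta>}"
    have "Kfun \<beta> y \<le> Kfun \<beta> ya" using Kfun_strict_antimono[OF b, of ya y] y by (cases "ya = y") auto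
    moreover have "lbeta \<beta> \<le> Kfun \<beta> y" "Gfun \<beta> (Kfun \<beta> y) = y" using Kfun_props[OF b, of y] y by auto
    ultimately show "y \<in> Gfun \<beta> ` S" unfolding S_def by (metis atLeastAtMost_iff imageI)
  qed
  then show ?thesis using c continuous_on_subset by blast
qed

lemma continuous_on_Hfun:
  assumes b: "\<beta> > 2" and ya: "ya \<le> gbeta \<beta>"
  shows "continuous_on {ya..gbeta \<beta>} (Hfun \<beta>)"
proof -
  have h0: "0 < Hfun \<beta> ya" using Hfun_props[OF b ya] by simp
  define S where "S = {Hfun \<beta> ya .. lbeta \<beta>}"
  have c: "continuous_on (Gfun \<beta> ` S) (Hfun \<beta>)"
  proof (rule continuous_on_inv)
    show "continuous_on S (Gfun \<beta>)" unfolding S_def using b h0 by (intro continuous_on_Gfun) auto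
    show "compact S" unfolding S_def by simp
    show "\<forall>x\<in>S. Hfun \<beta> (Gfun \<beta> x) = x" unfolding S_def using Hfun_Gfun[OF b] h0 by auto
  qed
  have "{ya..gbeta \<beta>} \<subseteq> Gfun \<beta> ` S"
  proof
    fix y assume y: "y \<in> {ya..gbeta \<beta>}"
    have "Hfun \<beta> ya \<le> Hfun \<beta> y" using Hfun_strict_mono[OF b, of ya y] y by (cases "ya = y") auto
    moreover have "Hfun \<beta> y \<le> lbeta \<beta>" "Gfun \<beta> (Hfun \<beta> y) = y" using Hfun_props[OF b, of y] y by auto
    ultimately show "y \<in> Gfun \<beta> ` S" unfolding S_def by (metis atLeastAtMost_iff imageI)
  qed
  then show ?thesis using c continuous_on_subset by blast
qed

text \<open>Below \<open>gbeta\<close> the pair \<open>H < K\<close> is parametrised by \<open>p = K / H > 1\<close>: from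
  \<open>ln p = (3\<beta>/2) H (p - 1)\<close> one gets \<open>H = lbeta \<cdot> h_of_ratio p\<close> and
  \<open>H + K = lbeta \<cdot> hk_sum_of_ratio p\<close>, and \<open>p\<close> decreases as the level \<open>y\<close> increases.\<close>

definition h_of_ratio :: "real \<Rightarrow> real" where "h_of_ratio p = ln p / (p - 1)"
definition hk_sum_of_ratio :: "real \<Rightarrow> real" where "hk_sum_of_ratio p = (p + 1) * ln p / (p - 1)"

lemma ln_gt_1_minus_inverse: fixes p :: real assumes "1 < p" shows "ln p > 1 - 1/p"
proof -
  have "(\<lambda>p. ln p - 1 + 1/p) 1 < (\<lambda>p. ln p - 1 + 1/p) p"
  proof (rule DERIV_pos_inside_imp_increasing[where f = "\<lambda>p. ln p - 1 + 1/p" and f' = "\<lambda>p. 1/p - 1/p^2"])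
    fix x assume "1 \<le> x" "x \<le> p"
    then show "((\<lambda>p. ln p - 1 + 1/p) has_real_derivative 1/x - 1/x^2) (at x)"
      by (auto intro!: derivative_eq_intros simp: power2_eq_square field_simps)
  next
    fix x assume x: "1 < x" "x < p"
    then have "x < x^2" by (simp add: power2_eq_square)
    then show "1/x - 1/x^2 > 0" using x by (simp add: field_simps)
  qed (use assms in auto)
  then show ?thesis by simp
qed

lemma two_ln_less_diff_inverse: fixes p :: real assumes "1 < p" shows "p - 1/p - 2 * ln p > 0"
proof -
  have "(\<lambda>p. p - 1/p - 2 * ln p) 1 < (\<lambda>p. p - 1/p - 2 * ln p) p"
  proof (rule DERIV_pos_inside_imp_increasing[where f = "\<lambda>p. p - 1/p - 2 * ln p" and f' = "\<lambda>p. (1 - 1/p)^2"])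
    fix x assume "1 \<le> x" "x \<le> p"
    then show "((\<lambda>p. p - 1/p - 2 * ln p) has_real_derivative (1 - 1/x)^2) (at x)"
      by (auto intro!: derivative_eq_intros simp: power2_eq_square field_simps)
  next
    fix x assume x: "1 < x" "x < p"
    then have "1 - 1/x \<noteq> 0" by simp
    then show "(1 - 1/x)^2 > 0" by simp
  qed (use assms in auto)
  then show ?thesis by simp
qed

lemma ln_gt_2_mul_ratio: fixes p :: real assumes "1 < p" shows "ln p > 2 * (p - 1) / (p + 1)"
proof -
  have "(\<lambda>p. ln p - 2 + 4 / (p + 1)) 1 < (\<lambda>p. ln p - 2 + 4 / (p + 1)) p"
  proof (rule DERIV_pos_inside_imp_increasing[where f = "\<lambda>p. ln p - 2 + 4 / (p + 1)" and f' = "\<lambda>p. 1/p - 4 / ((p + 1) * (p + 1))"])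
    fix x :: real assume x: "1 \<le> x" "x \<le> p"
    then have nz: "x + 1 \<noteq> 0" "x \<noteq> 0" by auto
    show "((\<lambda>p. ln p - 2 + 4 / (p + 1)) has_real_derivative 1/x - 4 / ((x + 1) * (x + 1))) (at x)"
      using x nz by (auto intro!: derivative_eq_intros)
  next
    fix x :: real assume x: "1 < x" "x < p"
    have "(x - 1) * (x - 1) > 0" using x by simp
    then have "4 * x < (x + 1) * (x + 1)" by (simp add: algebra_simps)
    moreover have "(x + 1) * (x + 1) > 0" using x by simp
    ultimately have "4 / ((x + 1) * (x + 1)) < 1 / x" using x by (simp add: field_simps)
    then show "1/x - 4 / ((x + 1) * (x + 1)) > 0" by simp
  qed (use assms in auto)
  moreover have "2 * (p - 1) / (p + 1) = 2 - 4 / (p + 1)" using assms by (simp add: field_simps)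
  ultimately show ?thesis by simp
qed

lemma h_of_ratio_strict_antimono:
  fixes p p' :: real
  assumes "1 < p" "p < p'"
  shows "h_of_ratio p' < h_of_ratio p"
proof (rule DERIV_neg_inside_imp_decreasing[where f = h_of_ratio and f' = "\<lambda>p. ((p - 1)/p - ln p) / (p - 1)^2"])
  fix x assume x: "p \<le> x" "x \<le> p'"
  then have "x > 1" using assms by simp
  then show "(h_of_ratio has_real_derivative ((x - 1)/x - ln x) / (x - 1)^2) (at x)"
    unfolding h_of_ratio_def[abs_def] by (auto intro!: derivative_eq_intros simp: power2_eq_square field_simps)
next
  fix x assume x: "p < x" "x < p'"
  then have "x > 1" using assms by simp
  then have "ln x > 1 - 1/x" by (rule ln_gt_1_minus_inverse)
  moreover have "(x - 1)/x = 1 - 1/x" using \<open>x > 1\<close> by (simp add: field_simps)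
  ultimately show "((x - 1)/x - ln x) / (x - 1)^2 < 0" using \<open>x > 1\<close> by (intro divide_neg_pos) auto
qed (use assms in auto)

lemma hk_sum_of_ratio_strict_mono:
  fixes p p' :: real
  assumes "1 < p" "p < p'"
  shows "hk_sum_of_ratio p < hk_sum_of_ratio p'"
proof (rule DERIV_pos_inside_imp_increasing[where f = hk_sum_of_ratio and f' = "\<lambda>p. (p - 1/p - 2 * ln p) / (p - 1)^2"])
  fix x assume x: "p \<le> x" "x \<le> p'"
  then have "x > 1" using assms by simp
  then have nz: "x - 1 \<noteq> 0" "x \<noteq> 0" by auto
  show "(hk_sum_of_ratio has_real_derivative (x - 1/x - 2 * ln x) / (x - 1)^2) (at x)"
    unfolding hk_sum_of_ratio_def[abs_def] using \<open>x > 1\<close> nz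
    by (auto intro!: derivative_eq_intros simp: power2_eq_square field_simps)
next
  fix x assume x: "p < x" "x < p'"
  then have "x > 1" using assms by simp
  then show "(x - 1/x - 2 * ln x) / (x - 1)^2 > 0" using two_ln_less_diff_inverse[of x] by (intro divide_pos_pos) auto
qed (use assms in auto)

lemma hk_sum_of_ratio_gt_2: fixes p :: real assumes "1 < p" shows "hk_sum_of_ratio p > 2"
  using ln_gt_2_mul_ratio[OF assms] assms unfolding hk_sum_of_ratio_def by (simp add: field_simps)

lemma Hfun_Kfun_ratio_param:
  assumes b: "\<beta> > 2" and y: "y < gbeta \<beta>"
  shows "\<exists>p > 1. Hfun \<beta> y = lbeta \<beta> * h_of_ratio p \<and> Hfun \<beta> y + Kfun \<beta> y = lbeta \<beta> * hk_sum_of_ratio p"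
proof -
  define H where "H = Hfun \<beta> y"
  define K where "K = Kfun \<beta> y"
  define p where "p = K / H"
  have H: "0 < H" "Gfun \<beta> H = y" using Hfun_props[OF b, of y] y by (auto simp: H_def)
  have K: "Gfun \<beta> K = y" using Kfun_props[OF b, of y] y by (auto simp: K_def)
  have HK: "H < K" using Hfun_Kfun_below_gbeta[OF b y] by (simp add: H_def K_def)
  have p1: "p > 1" and Kp: "K = H * p" using H HK by (simp_all add: p_def field_simps)
  have "ln p = 3/2 * \<beta> * (K - H)"
    using Gfun_eq_imp_ln_ratio[of \<beta> H K] H K HK b by (simp add: p_def)
  then have "ln p = (3*\<beta>/2) * H * (p - 1)" unfolding Kp by (simp add: algebra_simps)
  then have Hq: "H = lbeta \<beta> * h_of_ratio p"
    using p1 b unfolding h_of_ratio_def lbeta_def by (simp add: field_simps)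
  moreover have "H + K = lbeta \<beta> * hk_sum_of_ratio p"
    unfolding Kp using Hq p1 unfolding h_of_ratio_def hk_sum_of_ratio_def by (simp add: field_simps)
  ultimately show ?thesis using p1 unfolding H_def K_def by blast
qed

lemma Hfun_Kfun_sum_strict_antimono:
  assumes b: "\<beta> > 2" and y: "y < y'" "y' \<le> gbeta \<beta>"
  shows "Hfun \<beta> y' + Kfun \<beta> y' < Hfun \<beta> y + Kfun \<beta> y"
proof -
  have l: "0 < lbeta \<beta>" using lbeta_bounds[OF b] by simp
  obtain p where p: "p > 1" "Hfun \<beta> y = lbeta \<beta> * h_of_ratio p"
    "Hfun \<beta> y + Kfun \<beta> y = lbeta \<beta> * hk_sum_of_ratio p"
    using Hfun_Kfun_ratio_param[OF b, of y] y by auto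
  show ?thesis
  proof (cases "y' = gbeta \<beta>")
    case True
    then show ?thesis using hk_sum_of_ratio_gt_2[OF p(1)] Hfun_Kfun_gbeta[OF b] p l by simp
  next
    case False
    then obtain p' where p': "p' > 1" "Hfun \<beta> y' = lbeta \<beta> * h_of_ratio p'"
      "Hfun \<beta> y' + Kfun \<beta> y' = lbeta \<beta> * hk_sum_of_ratio p'"
      using Hfun_Kfun_ratio_param[OF b, of y'] y by auto
    have "h_of_ratio p < h_of_ratio p'" using Hfun_strict_mono[OF b y] p p' l by simp
    then have "p' < p"
      using h_of_ratio_strict_antimono[of p p'] p(1) by (cases p p' rule: linorder_cases) auto
    then show ?thesis using hk_sum_of_ratio_strict_mono[OF p'(1)] p p' l by simp
  qed
qed

definition sum_KHK :: "real \<Rightarrow> real \<Rightarrow> real \<Rightarrow> real" where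
  "sum_KHK \<beta> r y = Kfun \<beta> (y - 3*r/2) + Hfun \<beta> y + Kfun \<beta> y"

lemma sum_KHK_strict_antimono:
  assumes b: "\<beta> > 2" and r: "r \<ge> 0" and y: "y < y'" "y' \<le> gbeta \<beta>"
  shows "sum_KHK \<beta> r y' < sum_KHK \<beta> r y"
  using Hfun_Kfun_sum_strict_antimono[OF b y] Kfun_strict_antimono[OF b, of "y - 3*r/2" "y' - 3*r/2"] y r unfolding sum_KHK_def by simp

lemma Gfun_one_minus_2lbeta:
  assumes b: "\<beta> > 2"
  shows "Gfun \<beta> (1 - 2 * lbeta \<beta>) = gbeta \<beta> - 3 * r1 \<beta> / 2"
proof -
  define l where "l = lbeta \<beta>"
  have l: "0 < l" "l < 1/3" "3*l = 2/\<beta>" using lbeta_bounds[OF b] b by (auto simp: l_def lbeta_def)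
  have "ln (1 - 2*l) = ln l + ln ((1 - 2*l)/l)" using l by (simp add: ln_div)
  moreover have "ln ((1 - 2*l)/l) = ln (3*\<beta>/2 - 2)" using log_ratio_lbeta[OF b] by (simp add: log_ratio_def l_def)
  ultimately have "ln (1 - 2*l) = ln l + ln (3*\<beta>/2 - 2)" by simp
  then show ?thesis unfolding gbeta_def Gfun_def r1_def l_def[symmetric] using b l
    by (simp add: field_simps)
qed

lemma sum_KHK_gbeta_less_1: assumes b: "\<beta> > 2" and r: "0 < r" "r < r1 \<beta>"
  shows "sum_KHK \<beta> r (gbeta \<beta>) < 1"
proof -
  define l where "l = lbeta \<beta>"
  have l: "0 < l" "l < 1/3" using lbeta_bounds[OF b] by (auto simp: l_def)
  define z where "z = Kfun \<beta> (gbeta \<beta> - 3*r/2)"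
  have z: "l \<le> z" "Gfun \<beta> z = gbeta \<beta> - 3*r/2" using Kfun_props[OF b, of "gbeta \<beta> - 3*r/2"] r by (auto simp: z_def l_def)
  have "Gfun \<beta> (1 - 2*l) < Gfun \<beta> z" using Gfun_one_minus_2lbeta[OF b] z r by (simp add: l_def)
  then have "z < 1 - 2*l" using Gfun_strict_antimono[OF b, of "1 - 2*l" z] l by (cases "z = 1 - 2*l"; cases "z < 1 - 2*l") (auto simp: l_def)
  then show ?thesis unfolding sum_KHK_def using Hfun_Kfun_gbeta[OF b] by (simp add: z_def l_def)
qed

lemma continuous_on_sum_KHK:
  assumes b: "\<beta> > 2" and ya: "ya \<le> gbeta \<beta>" and r: "0 \<le> r"
  shows "continuous_on {ya..gbeta \<beta>} (sum_KHK \<beta> r)"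
proof -
  have "continuous_on {ya - 3*r/2..gbeta \<beta>} (Kfun \<beta>)"
    using continuous_on_Kfun[OF b, of "ya - 3*r/2"] ya r by simp
  then have "continuous_on {ya..gbeta \<beta>} (\<lambda>y. Kfun \<beta> (y - 3*r/2))"
    by (rule continuous_on_compose2) (use r in \<open>auto intro!: continuous_intros\<close>)
  then show ?thesis unfolding sum_KHK_def[abs_def]
    using continuous_on_Kfun[OF b ya] continuous_on_Hfun[OF b ya] by (intro continuous_intros)
qed

lemma y1_props: assumes b: "\<beta> > 2" and r: "0 < r" "r < r1 \<beta>"
  shows "y1 \<beta> r < gbeta \<beta> \<and> sum_KHK \<beta> r (y1 \<beta> r) = 1"
proof -
  define g where "g = gbeta \<beta>"
  have l: "0 < lbeta \<beta>" "lbeta \<beta> < 1/3" using lbeta_bounds[OF b] by auto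
  define ya where "ya = Gfun \<beta> 1"
  have ya: "ya \<le> g" using Gfun_le_gbeta[OF b, of 1] by (simp add: ya_def g_def)
  have Kya: "Kfun \<beta> ya = 1" using Kfun_Gfun[OF b, of 1] l by (simp add: ya_def)
  have "sum_KHK \<beta> r ya > 1"
  proof -
    have "0 < Hfun \<beta> ya" using Hfun_props[OF b] ya by (simp add: g_def)
    moreover have "0 < Kfun \<beta> (ya - 3*r/2)" using Kfun_props[OF b, of "ya - 3*r/2"] ya r l by (simp add: g_def)
    ultimately show ?thesis unfolding sum_KHK_def Kya by simp
  qed
  moreover have "sum_KHK \<beta> r g < 1" using sum_KHK_gbeta_less_1[OF b r] by (simp add: g_def)
  moreover have "continuous_on {ya..g} (sum_KHK \<beta> r)"
    using continuous_on_sum_KHK[OF b ya[unfolded g_def]] r by (simp add: g_def)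
  ultimately obtain y where y: "ya \<le> y" "y \<le> g" "sum_KHK \<beta> r y = 1"
    using IVT2'[of "sum_KHK \<beta> r" g 1 ya] ya by auto
  have yg: "y < g" using y \<open>sum_KHK \<beta> r g < 1\<close> by (cases "y = g") auto
  have "y1 \<beta> r = y" unfolding y1_def
  proof (rule the_equality)
    show "y \<le> gbeta \<beta> \<and> Kfun \<beta> (y - 3 * r / 2) + Hfun \<beta> y + Kfun \<beta> y = 1" using y by (simp add: g_def sum_KHK_def)
  next
    fix y' assume y': "y' \<le> gbeta \<beta> \<and> Kfun \<beta> (y' - 3 * r / 2) + Hfun \<beta> y' + Kfun \<beta> y' = 1"
    then have "sum_KHK \<beta> r y' = 1" by (simp add: sum_KHK_def)
    then show "y' = y"
      using sum_KHK_strict_antimono[OF b, of r y' y] sum_KHK_strict_antimono[OF b, of r y y'] r y y'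
      by (cases y' y rule: linorder_cases) (auto simp: g_def)
  qed
  then show ?thesis using y yg by (simp add: g_def)
qed


section \<open>Minimisers on the line \<open>lline \<beta> r\<close>\<close>

lemma argmin_lline_between_r1_r2:
  assumes b: "\<beta> > 2" and r: "r1 \<beta> < r" "r < r2 \<beta>"
  shows "{x \<in> lline \<beta> r. \<forall>y \<in> lline \<beta> r. Fbeta \<beta> x r \<le> Fbeta \<beta> y r} = {pbeta \<beta> r}"
proof -
  have r0: "0 < r" "r < 1" using r r1_nonneg[OF b] r2_eq[OF b] by auto
  define u where "u = ubeta \<beta> r"
  have u: "m0 r < u" "u < kfun r" using ubeta_props[OF b r0(1) r(2)] by (auto simp: u_def)
  have u0: "0 < u" using u m0_props[OF r0] by simp
  have "\<beta> * u \<le> 2/3" using ubeta_less_lbeta[OF b r] b by (simp add: u_def lbeta_def field_simps)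
  then have "Fbeta_asym \<beta> u 0 < Fbeta_asym \<beta> u d" if "0 \<le> d" "d \<le> u" "d \<noteq> 0" for d
    using Fbeta_asym_strict_min_at_0[of \<beta> u d] that b u0 by simp
  moreover have "2 * u \<le> 1" using u kfun_bounds[OF r0] by simp
  moreover have "lline \<beta> r = {x. fst x + snd x = 2*u} \<inter> Xi" using r by (simp add: lline_def u_def)
  ultimately show ?thesis
    using Fbeta_argmin_on_line[of u 0 \<beta> r] u0 by (simp add: pbeta_def u_def)
qed

lemma argmin_lline_below_r1:
  assumes b: "\<beta> > 2" and r: "0 < r" "r < r1 \<beta>"
  shows "{x \<in> lline \<beta> r. \<forall>y \<in> lline \<beta> r. Fbeta \<beta> x r \<le> Fbeta \<beta> y r}
       = {sigma1 \<beta> r, sigma2 \<beta> r}"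
proof -
  define y where "y = y1 \<beta> r"
  define H where "H = Hfun \<beta> y"
  define K where "K = Kfun \<beta> y"
  have y: "y < gbeta \<beta>" "sum_KHK \<beta> r y = 1" using y1_props[OF b r] by (auto simp: y_def)
  have H: "0 < H" "Gfun \<beta> H = y" using Hfun_props[OF b, of y] y by (auto simp: H_def)
  have K: "Gfun \<beta> K = y" using Kfun_props[OF b, of y] y by (auto simp: K_def)
  have HK: "H < K" using Hfun_Kfun_below_gbeta[OF b y(1)] by (simp add: H_def K_def)
  define a where "a = (H + K) / 2"
  define ds where "ds = (K - H) / 2"
  have ds: "0 < ds" "ds < a" using H HK by (auto simp: ds_def a_def)
  have "0 < Kfun \<beta> (y - 3*r/2)"
    using Kfun_props[OF b, of "y - 3*r/2"] lbeta_bounds[OF b] y r by fastforce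
  then have a1: "2 * a \<le> 1" using y(2) unfolding sum_KHK_def a_def H_def K_def by simp
  have "0 < H + K" "1 + ds/a = 2*K / (H + K)" "1 - ds/a = 2*H / (H + K)"
    using H HK by (auto simp: ds_def a_def field_simps)
  then have "(1 + ds/a) / (1 - ds/a) = K / H" using H by simp
  then have "artanh (ds/a) = 3/2 * \<beta> * ds"
    using Gfun_eq_imp_ln_ratio[of \<beta> H K] H K HK b by (simp add: artanh_def ds_def)
  then have "Fbeta_asym \<beta> a ds < Fbeta_asym \<beta> a d" if "0 \<le> d" "d \<le> a" "d \<noteq> ds" for d
    using Fbeta_asym_strict_min_at_critical_point[of \<beta> ds a d] that b ds by simp
  moreover have "2 * a = Hfun \<beta> (y1 \<beta> r) + Kfun \<beta> (y1 \<beta> r)" by (simp add: a_def H_def K_def y_def)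
  then have "lline \<beta> r = {x. fst x + snd x = 2*a} \<inter> Xi" using r by (simp add: lline_def)
  moreover have "{(a + ds, a - ds), (a - ds, a + ds)} = {sigma1 \<beta> r, sigma2 \<beta> r}"
    by (simp add: sigma1_def sigma2_def a_def ds_def H_def K_def y_def field_simps)
  ultimately show ?thesis
    using Fbeta_argmin_on_line[of a ds \<beta> r] ds a1 by simp
qed

theorem lemma5p11:
  fixes \<beta> r :: real
  assumes "\<beta> > 2"
  shows "(0 < r \<and> r < r1 \<beta> \<longrightarrow>
            {x \<in> lline \<beta> r. \<forall>y \<in> lline \<beta> r. Fbeta \<beta> x r \<le> Fbeta \<beta> y r}
              = {sigma1 \<beta> r, sigma2 \<beta> r})
       \<and> (r1 \<beta> < r \<and> r < r2 \<beta> \<longrightarrow>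
            {x \<in> lline \<beta> r. \<forall>y \<in> lline \<beta> r. Fbeta \<beta> x r \<le> Fbeta \<beta> y r}
              = {pbeta \<beta> r})"
  using argmin_lline_below_r1[OF assms] argmin_lline_between_r1_r2[OF assms] by blast

end
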